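(* Let $X$ be a toric variety and $W\subsetneq X$ a proper closed subset none of whose irreducible components is contained in the toric boundary. Then there exists a toric blow-up $\Upsilon:\tilde X\to X$ such that the strict transform $\tilde W$ of $W$ contains no $0$-dimensional torus orbit of $\tilde X$.
   Context: Over an algebraically closed field $k$ of characteristic $0$. A toric blow-up of $X=X(\Sigma)$ is the toric birational morphism $X(\Sigma')\to X(\Sigma)$ induced by a refinement (subdivision) $\Sigma'$ of the fan $\Sigma$ with the same support. The strict transform of $W$ is the closure in $\tilde X$ of $\Upsilon^{-1}(W\cap T)$, where $T$ is the big torus (over which $\Upsilon$ is an isomorphism). *)

theory Defs
  imports "HOL-Analysis.Analysis" "HOL-Computational_Algebra.Polynomial"
begin

text \<open>Toric varieties X(Sigma) over a field 'k, described concretely through their points.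
  Lattice N = M = int^'n, pairing via the standard inner product on real^'n.\<close>

definition lat_to_real :: "int ^ 'n \<Rightarrow> real ^ 'n" where
  "lat_to_real m = (\<chi> i. real_of_int (m $ i))"

definition rat_cone :: "(real ^ 'n::finite) set \<Rightarrow> bool" where
  "rat_cone \<sigma> \<longleftrightarrow> (\<exists>S :: (int ^ 'n) set. finite S \<and>
      \<sigma> = {\<Sum>v\<in>S. c v *\<^sub>R lat_to_real v | c. \<forall>v\<in>S. c v \<ge> 0})"

definition strongly_convex :: "(real ^ 'n::finite) set \<Rightarrow> bool" where
  "strongly_convex \<sigma> \<longleftrightarrow> \<sigma> \<inter> uminus ` \<sigma> = {0}"

definition is_fan :: "(real ^ 'n::finite) set set \<Rightarrow> bool" where
  "is_fan \<Sigma> \<longleftrightarrow> finite \<Sigma> \<and>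
     (\<forall>\<sigma>\<in>\<Sigma>. rat_cone \<sigma> \<and> strongly_convex \<sigma>) \<and>
     (\<forall>\<sigma>\<in>\<Sigma>. \<forall>\<tau>. \<tau> face_of \<sigma> \<and> \<tau> \<noteq> {} \<longrightarrow> \<tau> \<in> \<Sigma>) \<and>
     (\<forall>\<sigma>\<in>\<Sigma>. \<forall>\<sigma>'\<in>\<Sigma>. (\<sigma> \<inter> \<sigma>') face_of \<sigma> \<and> (\<sigma> \<inter> \<sigma>') face_of \<sigma>')"

definition refines :: "(real ^ 'n::finite) set set \<Rightarrow> (real ^ 'n) set set \<Rightarrow> bool" where
  "refines \<Sigma>' \<Sigma> \<longleftrightarrow> is_fan \<Sigma>' \<and> (\<forall>\<sigma>'\<in>\<Sigma>'. \<exists>\<sigma>\<in>\<Sigma>. \<sigma>' \<subseteq> \<sigma>) \<and> \<Union>\<Sigma>' = \<Union>\<Sigma>"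

definition dual_lat :: "(real ^ 'n::finite) set \<Rightarrow> (int ^ 'n) set" where
  "dual_lat \<sigma> = {m. \<forall>v\<in>\<sigma>. lat_to_real m \<bullet> v \<ge> 0}"

definition perp_lat :: "(real ^ 'n::finite) set \<Rightarrow> (int ^ 'n) set" where
  "perp_lat \<tau> = {m. \<forall>v\<in>\<tau>. lat_to_real m \<bullet> v = 0}"

text \<open>Points of X(Sigma): the disjoint union over tau in Sigma of the orbits
  O(tau) = Hom(tau^perp \<inter> M, k^*); a point is (tau, chi) with chi extended by 0
  outside tau^perp \<inter> M (so chi m is the value of the character x^m at the point).\<close>
definition tpoints :: "(real ^ 'n::finite) set set \<Rightarrow>
    ((real ^ 'n) set \<times> (int ^ 'n \<Rightarrow> 'k::field)) set" where
  "tpoints \<Sigma> = {(\<tau>, chi). \<tau> \<in> \<Sigma> \<and> (\<forall>m. chi m \<noteq> 0 \<longleftrightarrow> m \<in> perp_lat \<tau>) \<and>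
      (\<forall>m\<in>perp_lat \<tau>. \<forall>m'\<in>perp_lat \<tau>. chi (m + m') = chi m * chi m')}"

definition chart :: "(real ^ 'n::finite) set set \<Rightarrow> (real ^ 'n) set \<Rightarrow>
    ((real ^ 'n) set \<times> (int ^ 'n \<Rightarrow> 'k::field)) set" where
  "chart \<Sigma> \<sigma> = {p \<in> tpoints \<Sigma>. fst p face_of \<sigma>}"

text \<open>Regular functions on U_sigma: finite k-linear combinations of characters x^m, m in sigma^dual \<inter> M.\<close>
definition chart_poly :: "(real ^ 'n::finite) set \<Rightarrow> (int ^ 'n \<Rightarrow> 'k::field) \<Rightarrow> bool" where
  "chart_poly \<sigma> f \<longleftrightarrow> finite {m. f m \<noteq> 0} \<and> {m. f m \<noteq> 0} \<subseteq> dual_lat \<sigma>"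

definition eval_poly :: "(int ^ 'n::finite \<Rightarrow> 'k::field) \<Rightarrow>
    ((real ^ 'n) set \<times> (int ^ 'n \<Rightarrow> 'k)) \<Rightarrow> 'k" where
  "eval_poly f p = (\<Sum>m\<in>{m. f m \<noteq> 0}. f m * snd p m)"

definition zclosed :: "(real ^ 'n::finite) set set \<Rightarrow>
    ((real ^ 'n) set \<times> (int ^ 'n \<Rightarrow> 'k::field)) set \<Rightarrow> bool" where
  "zclosed \<Sigma> Z \<longleftrightarrow> Z \<subseteq> tpoints \<Sigma> \<and>
     (\<forall>\<sigma>\<in>\<Sigma>. \<exists>F. (\<forall>f\<in>F. chart_poly \<sigma> f) \<and>
        Z \<inter> chart \<Sigma> \<sigma> = {p \<in> chart \<Sigma> \<sigma>. \<forall>f\<in>F. eval_poly f p = 0})"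

definition zclosure :: "(real ^ 'n::finite) set set \<Rightarrow>
    ((real ^ 'n) set \<times> (int ^ 'n \<Rightarrow> 'k::field)) set \<Rightarrow>
    ((real ^ 'n) set \<times> (int ^ 'n \<Rightarrow> 'k)) set" where
  "zclosure \<Sigma> A = \<Inter>{Z. zclosed \<Sigma> Z \<and> A \<subseteq> Z}"

definition zirreducible :: "(real ^ 'n::finite) set set \<Rightarrow>
    ((real ^ 'n) set \<times> (int ^ 'n \<Rightarrow> 'k::field)) set \<Rightarrow> bool" where
  "zirreducible \<Sigma> Z \<longleftrightarrow> zclosed \<Sigma> Z \<and> Z \<noteq> {} \<and>
     (\<forall>Z1 Z2. zclosed \<Sigma> Z1 \<and> zclosed \<Sigma> Z2 \<and> Z = Z1 \<union> Z2 \<longrightarrow> Z = Z1 \<or> Z = Z2)"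

definition irred_component :: "(real ^ 'n::finite) set set \<Rightarrow>
    ((real ^ 'n) set \<times> (int ^ 'n \<Rightarrow> 'k::field)) set \<Rightarrow>
    ((real ^ 'n) set \<times> (int ^ 'n \<Rightarrow> 'k)) set \<Rightarrow> bool" where
  "irred_component \<Sigma> W Z \<longleftrightarrow> zirreducible \<Sigma> Z \<and> Z \<subseteq> W \<and>
     (\<forall>Z'. zirreducible \<Sigma> Z' \<and> Z \<subseteq> Z' \<and> Z' \<subseteq> W \<longrightarrow> Z' = Z)"

definition big_torus :: "(real ^ 'n::finite) set set \<Rightarrow>
    ((real ^ 'n) set \<times> (int ^ 'n \<Rightarrow> 'k::field)) set" where
  "big_torus \<Sigma> = {p \<in> tpoints \<Sigma>. fst p = {0}}"

definition toric_boundary :: "(real ^ 'n::finite) set set \<Rightarrow>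
    ((real ^ 'n) set \<times> (int ^ 'n \<Rightarrow> 'k::field)) set" where
  "toric_boundary \<Sigma> = tpoints \<Sigma> - big_torus \<Sigma>"

text \<open>Strict transform of W under the toric blow-up X(Sigma') \<rightarrow> X(Sigma): the closure in
  X(Sigma') of the preimage of W \<inter> T; on T the morphism is the identity, and with our
  representation the torus points of X(Sigma') and X(Sigma) coincide literally.\<close>
definition strict_transform :: "(real ^ 'n::finite) set set \<Rightarrow>
    ((real ^ 'n) set \<times> (int ^ 'n \<Rightarrow> 'k::field)) set \<Rightarrow>
    ((real ^ 'n) set \<times> (int ^ 'n \<Rightarrow> 'k)) set" where
  "strict_transform \<Sigma>' W = zclosure \<Sigma>' {p \<in> big_torus \<Sigma>'. p \<in> W}"

definition orbit :: "(real ^ 'n::finite) set set \<Rightarrow> (real ^ 'n) set \<Rightarrow>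
    ((real ^ 'n) set \<times> (int ^ 'n \<Rightarrow> 'k::field)) set" where
  "orbit \<Sigma> \<tau> = {p \<in> tpoints \<Sigma>. fst p = \<tau>}"

definition orbit_dim :: "(real ^ 'n::finite) set \<Rightarrow> nat" where
  "orbit_dim \<tau> = CARD('n) - dim \<tau>"

end

theory Submission
  imports Defs
begin

text \<open>
  A point of \<open>X\<close> outside \<open>W\<close> gives a regular function \<open>f\<close> on its affine chart that
  vanishes on \<open>W\<close> but not at that point; in particular \<open>W \<inter> T\<close> lies in the zero set of the
  Laurent polynomial \<open>f\<close>. Refine \<open>\<Sigma>\<close> by the normal fan of the Newton polytope of \<open>f\<close>. On
  the chart of a cone of the refinement lying in the normal cone at \<open>m\<close>, the Laurent
  polynomial \<open>x\<^sup>-\<^sup>m f\<close> is regular, and at a torus fixed point it takes the value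
  \<open>f\<^sub>m \<noteq> 0\<close>. So the closure of \<open>V(f) \<inter> T\<close>, which contains the strict transform of \<open>W\<close>,
  contains no torus fixed point. The new cones are rational by Fourier--Motzkin elimination.
\<close>

section \<open>Finitely generated convex cones\<close>

lemma convex_cone_sum:
  assumes "convex_cone K" "\<And>i. i \<in> I \<Longrightarrow> f i \<in> K"
  shows "sum f I \<in> K"
  using assms(2)
  by (induction I rule: infinite_finite_induct)
     (auto intro: convex_cone_add[OF assms(1)] simp: convex_cone_contains_0[OF assms(1)])

lemma convex_cone_nonneg_combinations:
  fixes f :: "'b \<Rightarrow> 'a::real_vector"
  shows "convex_cone {\<Sum>v\<in>S. c v *\<^sub>R f v | c. \<forall>v\<in>S. 0 \<le> c v}" (is "convex_cone ?C")
  unfolding convex_cone_iff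
proof (intro conjI ballI allI impI)
  have memC: "x \<in> ?C" if "\<forall>v\<in>S. 0 \<le> c v" "x = (\<Sum>v\<in>S. c v *\<^sub>R f v)" for c x
    using that by blast
  show "0 \<in> ?C"
    using memC[of "\<lambda>_. 0"] by simp
  show "x + y \<in> ?C" if x: "x \<in> ?C" and y: "y \<in> ?C" for x y
  proof -
    obtain c d where "x = (\<Sum>v\<in>S. c v *\<^sub>R f v)" "\<forall>v\<in>S. 0 \<le> c v"
      and "y = (\<Sum>v\<in>S. d v *\<^sub>R f v)" "\<forall>v\<in>S. 0 \<le> d v"
      using x y by force
    then have "x + y = (\<Sum>v\<in>S. (c v + d v) *\<^sub>R f v)" "\<forall>v\<in>S. 0 \<le> c v + d v"
      by (simp_all add: sum.distrib scaleR_add_left)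
    then show ?thesis by (intro memC)
  qed
  show "t *\<^sub>R x \<in> ?C" if x: "x \<in> ?C" and "0 \<le> t" for x t
  proof -
    obtain c where "x = (\<Sum>v\<in>S. c v *\<^sub>R f v)" "\<forall>v\<in>S. 0 \<le> c v"
      using x by force
    then have "t *\<^sub>R x = (\<Sum>v\<in>S. (t * c v) *\<^sub>R f v)" "\<forall>v\<in>S. 0 \<le> t * c v"
      using \<open>0 \<le> t\<close> by (simp_all add: scaleR_sum_right)
    then show ?thesis by (intro memC)
  qed
qed

lemma convex_cone_hull_finite_image:
  fixes f :: "'b \<Rightarrow> 'a::real_vector"
  assumes "finite S"
  shows "convex_cone hull (f ` S) = {\<Sum>v\<in>S. c v *\<^sub>R f v | c. \<forall>v\<in>S. 0 \<le> c v}"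
    (is "_ = ?C")
proof
  have "f ` S \<subseteq> ?C"
  proof (rule image_subsetI)
    fix u assume "u \<in> S"
    have "(\<Sum>v\<in>S. (if v = u then 1 else 0) *\<^sub>R f v) = (\<Sum>v\<in>S. if v = u then f v else 0)"
      by (rule sum.cong) auto
    also have "\<dots> = f u"
      using assms \<open>u \<in> S\<close> by simp
    finally have "f u = (\<Sum>v\<in>S. (if v = u then 1 else 0) *\<^sub>R f v)" ..
    then show "f u \<in> ?C"
      by fastforce
  qed
  then show "convex_cone hull (f ` S) \<subseteq> ?C"
    by (rule hull_minimal) (rule convex_cone_nonneg_combinations)
  show "?C \<subseteq> convex_cone hull (f ` S)"
  proof clarify
    fix c :: "'b \<Rightarrow> real" assume "\<forall>v\<in>S. 0 \<le> c v"
    then show "(\<Sum>v\<in>S. c v *\<^sub>R f v) \<in> convex_cone hull (f ` S)"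
      by (intro convex_cone_sum[OF convex_cone_convex_cone_hull] convex_cone_hull_mul hull_inc) auto
  qed
qed

lemma convex_cone_hull_finite:
  fixes T :: "'a::real_vector set"
  assumes "finite T"
  shows "convex_cone hull T = {\<Sum>v\<in>T. c v *\<^sub>R v | c. \<forall>v\<in>T. 0 \<le> c v}"
  using convex_cone_hull_finite_image[OF assms, of id] by simp

lemma convex_cone_hull_finite_mem_iff:
  fixes T :: "'a::real_vector set"
  assumes "finite T"
  shows "x \<in> convex_cone hull T \<longleftrightarrow> (\<exists>c. (\<forall>v\<in>T. 0 \<le> c v) \<and> x = (\<Sum>v\<in>T. c v *\<^sub>R v))"
  using convex_cone_hull_finite[OF assms] by auto

lemma face_of_convex_cone_summand:
  assumes K: "convex_cone K" and F: "F face_of K"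
    and "x \<in> K" "y \<in> K" "x + y \<in> F"
  shows "x \<in> F"
proof -
  have conicF: "conic F" using face_of_conic[OF _ F] K by (simp add: convex_cone_def)
  have "2 *\<^sub>R x \<in> F"
  proof (cases "x = y")
    case True
    then show ?thesis using \<open>x + y \<in> F\<close> by (simp add: scaleR_2)
  next
    case False
    have "x + y = midpoint (2 *\<^sub>R x) (2 *\<^sub>R y)"
      by (simp add: midpoint_def scaleR_add_right)
    then have "x + y \<in> open_segment (2 *\<^sub>R x) (2 *\<^sub>R y)"
      using False by simp
    then show ?thesis
      using face_ofD[OF F] \<open>x + y \<in> F\<close> assms(3,4) convex_cone_scaleR[OF K] by fastforce
  qed
  then show ?thesis using conic_mul[OF conicF, of "2 *\<^sub>R x" "1/2"] by simp
qed

lemma face_of_convex_cone_hull_finite: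
  fixes T :: "'a::real_vector set"
  assumes T: "finite T" and F: "F face_of convex_cone hull T" and "F \<noteq> {}"
  shows "F = convex_cone hull (T \<inter> F)"
proof
  let ?K = "convex_cone hull T"
  have K: "convex_cone ?K" by (rule convex_cone_convex_cone_hull)
  have "convex_cone F"
    using face_of_conic[OF _ F] face_of_imp_convex[OF F] K \<open>F \<noteq> {}\<close>
    by (simp add: convex_cone_def)
  then show "convex_cone hull (T \<inter> F) \<subseteq> F"
    by (simp add: hull_minimal)
  show "F \<subseteq> convex_cone hull (T \<inter> F)"
  proof
    fix x assume "x \<in> F"
    then obtain c where c: "\<forall>v\<in>T. 0 \<le> c v" "x = (\<Sum>v\<in>T. c v *\<^sub>R v)"
      using face_of_imp_subset[OF F] convex_cone_hull_finite_mem_iff[OF T] by blast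
    have "v \<in> F" if "v \<in> T" "c v \<noteq> 0" for v
    proof -
      have "c v *\<^sub>R v + (\<Sum>w\<in>T - {v}. c w *\<^sub>R w) \<in> F"
        using \<open>x \<in> F\<close> c(2) T that(1) by (simp add: sum.remove)
      moreover have "(\<Sum>w\<in>T - {v}. c w *\<^sub>R w) \<in> ?K"
        using c(1) by (intro convex_cone_sum[OF K] convex_cone_hull_mul hull_inc) auto
      ultimately have "c v *\<^sub>R v \<in> F"
        using c(1) that(1) by (auto intro: face_of_convex_cone_summand[OF K F] convex_cone_hull_mul hull_inc)
      then show "v \<in> F"
        using convex_cone_scaleR[OF \<open>convex_cone F\<close>, of "1 / c v" "c v *\<^sub>R v"] c(1) that by simp
    qed
    then have "x = (\<Sum>v\<in>T \<inter> F. c v *\<^sub>R v)"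
      using c(2) T by (auto intro: sum.mono_neutral_right)
    then show "x \<in> convex_cone hull (T \<inter> F)"
      using c(1) T convex_cone_hull_finite_mem_iff[of "T \<inter> F"] by auto
  qed
qed

lemma finite_faces_convex_cone_hull:
  fixes T :: "'a::real_vector set"
  assumes "finite T"
  shows "finite {F. F face_of convex_cone hull T}"
proof -
  have "{F. F face_of convex_cone hull T} \<subseteq> insert {} ((\<lambda>U. convex_cone hull U) ` Pow T)"
    using face_of_convex_cone_hull_finite[OF assms] by blast
  then show ?thesis
    using assms finite_subset by blast
qed

lemma zero_face_of_pointed_cone:
  assumes K: "convex_cone K" and pointed: "K \<inter> uminus ` K = {0}"
  shows "{0} face_of K"
proof -
  have "a = 0" if a: "a \<in> K" and b: "b \<in> K" and ab: "0 \<in> open_segment a b" for a b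
  proof -
    obtain u where u: "0 < u" "u < 1" "(1 - u) *\<^sub>R a + u *\<^sub>R b = 0"
      using ab by (auto simp: in_segment)
    then have eq: "u *\<^sub>R b = (1 - u) *\<^sub>R (- a)"
      using add_eq_0_iff by fastforce
    have "(u / (1 - u)) *\<^sub>R b = (1 / (1 - u)) *\<^sub>R (u *\<^sub>R b)"
      by simp
    also have "\<dots> = (1 / (1 - u)) *\<^sub>R ((1 - u) *\<^sub>R (- a))"
      by (simp only: eq)
    also have "\<dots> = - a"
      using u by simp
    finally have "(u / (1 - u)) *\<^sub>R b = - a" .
    moreover have "0 \<le> u / (1 - u)"
      using u by simp
    ultimately have "- a \<in> K"
      using convex_cone_scaleR[OF K _ b] by metis
    then show "a = 0"
      using pointed a by (metis IntI image_eqI minus_minus singletonD)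
  qed
  moreover have "0 \<in> open_segment a b \<Longrightarrow> a = 0 \<Longrightarrow> b = 0" for a b
    by (auto simp: in_segment)
  ultimately show ?thesis
    using convex_cone_contains_0[OF K] by (auto simp: face_of_def)
qed

section \<open>Fourier--Motzkin elimination\<close>

lemma sum_pair_combinations:
  fixes a :: "'a::real_inner"
  shows "(\<Sum>h\<in>N. \<Sum>g\<in>P. (c h * c g) *\<^sub>R ((a \<bullet> g) *\<^sub>R h - (a \<bullet> h) *\<^sub>R g))
       = (\<Sum>g\<in>P. c g * (a \<bullet> g)) *\<^sub>R (\<Sum>h\<in>N. c h *\<^sub>R h)
         - (\<Sum>h\<in>N. c h * (a \<bullet> h)) *\<^sub>R (\<Sum>g\<in>P. c g *\<^sub>R g)"
proof -
  have "(\<Sum>h\<in>N. \<Sum>g\<in>P. (c h * c g) *\<^sub>R ((a \<bullet> g) *\<^sub>R h))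
      = (\<Sum>g\<in>P. c g * (a \<bullet> g)) *\<^sub>R (\<Sum>h\<in>N. c h *\<^sub>R h)"
    by (simp add: scaleR_sum_left scaleR_sum_right sum_distrib_left mult_ac)
  moreover have "(\<Sum>h\<in>N. \<Sum>g\<in>P. (c h * c g) *\<^sub>R ((a \<bullet> h) *\<^sub>R g))
      = (\<Sum>h\<in>N. c h * (a \<bullet> h)) *\<^sub>R (\<Sum>g\<in>P. c g *\<^sub>R g)"
    by (subst sum.swap) (simp add: scaleR_sum_left scaleR_sum_right sum_distrib_left mult_ac)
  ultimately show ?thesis
    by (simp add: scaleR_right_diff_distrib sum_subtractf)
qed

definition fourier_motzkin :: "'a::real_inner \<Rightarrow> 'a set \<Rightarrow> 'a set" where
  "fourier_motzkin a T = {v \<in> T. 0 \<le> a \<bullet> v} \<union>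
     (\<lambda>(g, h). (a \<bullet> g) *\<^sub>R h - (a \<bullet> h) *\<^sub>R g) ` ({g \<in> T. 0 < a \<bullet> g} \<times> {h \<in> T. a \<bullet> h < 0})"

lemma finite_fourier_motzkin: "finite T \<Longrightarrow> finite (fourier_motzkin a T)"
  by (simp add: fourier_motzkin_def)

lemma fourier_motzkin_subset_halfspace:
  "fourier_motzkin a T \<subseteq> convex_cone hull T \<inter> {v. 0 \<le> a \<bullet> v}"
proof
  fix w assume "w \<in> fourier_motzkin a T"
  then consider "w \<in> T" "0 \<le> a \<bullet> w"
    | g h where "g \<in> T" "0 < a \<bullet> g" "h \<in> T" "a \<bullet> h < 0" "w = (a \<bullet> g) *\<^sub>R h - (a \<bullet> h) *\<^sub>R g"
    unfolding fourier_motzkin_def by auto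
  then show "w \<in> convex_cone hull T \<inter> {v. 0 \<le> a \<bullet> v}"
  proof cases
    case 1
    then show ?thesis by (simp add: hull_inc)
  next
    case 2
    have "(a \<bullet> g) *\<^sub>R h + (- (a \<bullet> h)) *\<^sub>R g \<in> convex_cone hull T"
      using 2 by (intro convex_cone_hull_add convex_cone_hull_mul hull_inc) auto
    then show ?thesis
      using 2 by (simp add: inner_diff_right)
  qed
qed

lemma fourier_motzkin_cancellation:
  fixes a :: "'a::real_inner"
  assumes "finite P" "finite N" "P \<subseteq> {v \<in> T. 0 < a \<bullet> v}" "N \<subseteq> {v \<in> T. a \<bullet> v < 0}"
    and c: "\<forall>v\<in>P \<union> N. 0 \<le> c v" and p: "0 < (\<Sum>g\<in>P. c g * (a \<bullet> g))"
  shows "(\<Sum>h\<in>N. c h *\<^sub>R h) - ((\<Sum>h\<in>N. c h * (a \<bullet> h)) / (\<Sum>g\<in>P. c g * (a \<bullet> g))) *\<^sub>R (\<Sum>g\<in>P. c g *\<^sub>R g)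
    \<in> convex_cone hull (fourier_motzkin a T)"
proof -
  let ?p = "\<Sum>g\<in>P. c g * (a \<bullet> g)"
  have "(\<Sum>h\<in>N. c h *\<^sub>R h) - ((\<Sum>h\<in>N. c h * (a \<bullet> h)) / ?p) *\<^sub>R (\<Sum>g\<in>P. c g *\<^sub>R g)
      = (1 / ?p) *\<^sub>R (\<Sum>h\<in>N. \<Sum>g\<in>P. (c h * c g) *\<^sub>R ((a \<bullet> g) *\<^sub>R h - (a \<bullet> h) *\<^sub>R g))"
    unfolding sum_pair_combinations using p by (simp add: scaleR_right_diff_distrib)
  also have "\<dots> \<in> convex_cone hull (fourier_motzkin a T)"
    using assms
    by (intro convex_cone_hull_mul convex_cone_sum[OF convex_cone_convex_cone_hull] hull_inc)
       (auto simp: fourier_motzkin_def subset_iff)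
  finally show ?thesis .
qed

lemma fourier_motzkin_positive_part:
  fixes a :: "'a::real_inner"
  assumes "finite Q" "Q \<subseteq> {v \<in> T. 0 \<le> a \<bullet> v}" "P \<subseteq> Q"
    and c: "\<forall>v\<in>Q. 0 \<le> c v" and t: "0 \<le> t" "t \<le> 1"
  shows "(\<Sum>v\<in>Q. c v *\<^sub>R v) - t *\<^sub>R (\<Sum>g\<in>P. c g *\<^sub>R g) \<in> convex_cone hull (fourier_motzkin a T)"
proof -
  define d where "d v = c v - t * (if v \<in> P then c v else 0)" for v
  have "(\<Sum>g\<in>P. c g *\<^sub>R g) = (\<Sum>v\<in>Q. (if v \<in> P then c v else 0) *\<^sub>R v)"
    using assms(1,3) by (intro sum.mono_neutral_cong_left) auto
  then have "(\<Sum>v\<in>Q. c v *\<^sub>R v) - t *\<^sub>R (\<Sum>g\<in>P. c g *\<^sub>R g) = (\<Sum>v\<in>Q. d v *\<^sub>R v)"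
    by (simp add: d_def scaleR_sum_right scaleR_left_diff_distrib sum_subtractf)
  also have "\<dots> \<in> convex_cone hull (fourier_motzkin a T)"
    using assms(2) c t
    by (intro convex_cone_sum[OF convex_cone_convex_cone_hull] convex_cone_hull_mul hull_inc)
       (auto simp: d_def fourier_motzkin_def subset_iff mult_left_le_one_le)
  finally show ?thesis .
qed

lemma inner_sum_sign_split:
  fixes a :: "'a::real_inner"
  assumes "finite T"
  shows "a \<bullet> (\<Sum>v\<in>T. c v *\<^sub>R v)
    = (\<Sum>g\<in>{v \<in> T. 0 < a \<bullet> v}. c g * (a \<bullet> g)) + (\<Sum>h\<in>{v \<in> T. a \<bullet> v < 0}. c h * (a \<bullet> h))"
proof -
  have "a \<bullet> (\<Sum>v\<in>T. c v *\<^sub>R v) = (\<Sum>v\<in>{v \<in> T. 0 < a \<bullet> v} \<union> {v \<in> T. a \<bullet> v < 0}. c v * (a \<bullet> v))"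
    using assms by (auto simp: inner_sum_right intro: sum.mono_neutral_right)
  also have "\<dots> = (\<Sum>g\<in>{v \<in> T. 0 < a \<bullet> v}. c g * (a \<bullet> g)) + (\<Sum>h\<in>{v \<in> T. a \<bullet> v < 0}. c h * (a \<bullet> h))"
    using assms by (intro sum.union_disjoint) auto
  finally show ?thesis .
qed

lemma halfspace_subset_convex_cone_hull_fourier_motzkin:
  fixes a :: "'a::real_inner"
  assumes T: "finite T" and "x \<in> convex_cone hull T" "0 \<le> a \<bullet> x"
  shows "x \<in> convex_cone hull (fourier_motzkin a T)"
proof -
  let ?FM = "convex_cone hull (fourier_motzkin a T)"
  obtain c where c: "\<forall>v\<in>T. 0 \<le> c v" "x = (\<Sum>v\<in>T. c v *\<^sub>R v)"
    using assms(2) convex_cone_hull_finite_mem_iff[OF T] by blast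
  define P where "P = {v \<in> T. 0 < a \<bullet> v}"
  define N where "N = {v \<in> T. a \<bullet> v < 0}"
  define Q where "Q = T - N"
  define p where "p = (\<Sum>g\<in>P. c g * (a \<bullet> g))"
  define n where "n = - (\<Sum>h\<in>N. c h * (a \<bullet> h))"
  define G where "G = (\<Sum>g\<in>P. c g *\<^sub>R g)"
  have fin: "finite P" "finite N" "finite Q"
    using T by (auto simp: P_def N_def Q_def)
  have "n \<le> p"
    using assms(3) inner_sum_sign_split[OF T, of a c] by (simp add: c(2) p_def n_def P_def N_def)
  have "0 \<le> n"
    unfolding n_def using c(1) by (auto simp: N_def intro!: sum_nonpos mult_nonneg_nonpos[OF _ less_imp_le])
  have x: "x = (\<Sum>v\<in>Q. c v *\<^sub>R v) + (\<Sum>h\<in>N. c h *\<^sub>R h)"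
    using c(2) T by (simp add: Q_def N_def sum.subset_diff[of N T])
  have Q: "(\<Sum>v\<in>Q. c v *\<^sub>R v) - t *\<^sub>R G \<in> ?FM" if "0 \<le> t" "t \<le> 1" for t
    unfolding G_def using fin(3) c(1) that
    by (intro fourier_motzkin_positive_part) (auto simp: P_def N_def Q_def)
  show "x \<in> ?FM"
  proof (cases "p = 0")
    case True
    then have "(\<Sum>h\<in>N. c h * - (a \<bullet> h)) = 0"
      using \<open>n \<le> p\<close> \<open>0 \<le> n\<close> by (simp add: n_def sum_negf)
    then have "\<forall>h\<in>N. c h = 0"
      using c(1) fin(2) by (subst (asm) sum_nonneg_eq_0_iff) (auto simp: N_def mult_le_0_iff)
    then show ?thesis
      using x Q[of 0] by simp
  next
    case False
    then have "0 < p"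
      using \<open>n \<le> p\<close> \<open>0 \<le> n\<close> by simp
    txt \<open>Cancel the negative part against the fraction \<open>n / p\<close> of the positive part \<open>G\<close>.\<close>
    have "(\<Sum>h\<in>N. c h *\<^sub>R h) - ((\<Sum>h\<in>N. c h * (a \<bullet> h)) / p) *\<^sub>R G \<in> ?FM"
      unfolding p_def G_def using fin(1,2) c(1) \<open>0 < p\<close>[unfolded p_def]
      by (intro fourier_motzkin_cancellation) (auto simp: P_def N_def)
    then have "(\<Sum>h\<in>N. c h *\<^sub>R h) + (n / p) *\<^sub>R G \<in> ?FM"
      by (simp add: n_def)
    moreover have "(\<Sum>v\<in>Q. c v *\<^sub>R v) - (n / p) *\<^sub>R G \<in> ?FM"
      using Q \<open>0 < p\<close> \<open>n \<le> p\<close> \<open>0 \<le> n\<close> by simp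
    ultimately show ?thesis
      using x convex_cone_hull_add by fastforce
  qed
qed

lemma convex_cone_hull_Int_halfspace:
  fixes a :: "'a::real_inner"
  assumes "finite T"
  shows "convex_cone hull T \<inter> {v. 0 \<le> a \<bullet> v} = convex_cone hull (fourier_motzkin a T)"
proof
  show "convex_cone hull (fourier_motzkin a T) \<subseteq> convex_cone hull T \<inter> {v. 0 \<le> a \<bullet> v}"
    using fourier_motzkin_subset_halfspace
    by (intro hull_minimal convex_cone_Inter[of "{_, _}", simplified])
       (auto simp: convex_cone_convex_cone_hull convex_cone_halfspace_ge)
  show "convex_cone hull T \<inter> {v. 0 \<le> a \<bullet> v} \<subseteq> convex_cone hull (fourier_motzkin a T)"
    using halfspace_subset_convex_cone_hull_fourier_motzkin[OF assms] by blast
qed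

section \<open>Rational cones and fans\<close>

lemma inj_lat_to_real: "inj lat_to_real"
  by (auto simp: inj_def lat_to_real_def vec_eq_iff)

lemma lat_to_real_diff: "lat_to_real (a - b) = lat_to_real a - lat_to_real b"
  and lat_to_real_0: "lat_to_real 0 = 0"
  by (simp_all add: lat_to_real_def vec_eq_iff)

lemma lat_to_real_eq_0_iff: "lat_to_real a = 0 \<longleftrightarrow> a = 0"
  using inj_lat_to_real lat_to_real_0 by (metis injD)

lemma inner_lat_to_real_Ints: "lat_to_real a \<bullet> lat_to_real b \<in> \<int>"
  by (auto simp: lat_to_real_def inner_vec_def intro!: Ints_sum)

lemma Ints_scaleR_lat_to_real:
  assumes "k \<in> \<int>"
  shows "k *\<^sub>R lat_to_real a \<in> range lat_to_real"
proof -
  obtain j where "k = of_int j"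
    using assms by (auto elim: Ints_cases)
  then have "k *\<^sub>R lat_to_real a = lat_to_real (\<chi> i. j * a $ i)"
    by (simp add: lat_to_real_def vec_eq_iff)
  then show ?thesis by simp
qed

lemma finite_subset_range_lat_to_real:
  assumes "finite T" "T \<subseteq> range lat_to_real"
  obtains S where "finite S" "T = lat_to_real ` S"
proof
  show "finite (lat_to_real -` T)"
    using assms(1) inj_lat_to_real by (rule finite_vimageI)
  show "T = lat_to_real ` (lat_to_real -` T)"
    using assms(2) by auto
qed

lemma rat_cone_iff:
  "rat_cone \<sigma> \<longleftrightarrow> (\<exists>T. finite T \<and> T \<subseteq> range lat_to_real \<and> \<sigma> = convex_cone hull T)"
proof
  assume "rat_cone \<sigma>"
  then obtain S where S: "finite S"
    "\<sigma> = {\<Sum>v\<in>S. c v *\<^sub>R lat_to_real v | c. \<forall>v\<in>S. c v \<ge> 0}"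
    unfolding rat_cone_def by (elim exE conjE)
  then have "\<sigma> = convex_cone hull (lat_to_real ` S)"
    by (simp add: convex_cone_hull_finite_image)
  then show "\<exists>T. finite T \<and> T \<subseteq> range lat_to_real \<and> \<sigma> = convex_cone hull T"
    using S(1) by (intro exI[of _ "lat_to_real ` S"] conjI) auto
next
  assume "\<exists>T. finite T \<and> T \<subseteq> range lat_to_real \<and> \<sigma> = convex_cone hull T"
  then obtain T where T: "finite T" "T \<subseteq> range lat_to_real" "\<sigma> = convex_cone hull T"
    by (elim exE conjE)
  obtain S where S: "finite S" "T = lat_to_real ` S"
    using finite_subset_range_lat_to_real[OF T(1,2)] .
  then have "\<sigma> = {\<Sum>v\<in>S. c v *\<^sub>R lat_to_real v | c. \<forall>v\<in>S. c v \<ge> 0}"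
    using T(3) by (simp add: convex_cone_hull_finite_image)
  then show "rat_cone \<sigma>"
    unfolding rat_cone_def using S(1) by (intro exI[of _ S] conjI)
qed

lemma convex_cone_rat_cone: "rat_cone \<sigma> \<Longrightarrow> convex_cone \<sigma>"
  unfolding rat_cone_iff using convex_cone_convex_cone_hull by auto

lemma fourier_motzkin_lattice:
  assumes a: "a \<in> range lat_to_real" and T: "T \<subseteq> range lat_to_real"
  shows "fourier_motzkin a T \<subseteq> range lat_to_real"
proof -
  have "(a \<bullet> g) *\<^sub>R h - (a \<bullet> h) *\<^sub>R g \<in> range lat_to_real" if g: "g \<in> T" and h: "h \<in> T" for g h
  proof -
    obtain a' g' h' where "a = lat_to_real a'" "g = lat_to_real g'" "h = lat_to_real h'"
      using a g h T by blast
    then have "(a \<bullet> g) *\<^sub>R h \<in> range lat_to_real" "(a \<bullet> h) *\<^sub>R g \<in> range lat_to_real"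
      by (simp_all add: Ints_scaleR_lat_to_real inner_lat_to_real_Ints)
    then obtain x y where "(a \<bullet> g) *\<^sub>R h = lat_to_real x" "(a \<bullet> h) *\<^sub>R g = lat_to_real y"
      by blast
    then have "(a \<bullet> g) *\<^sub>R h - (a \<bullet> h) *\<^sub>R g = lat_to_real (x - y)"
      by (simp add: lat_to_real_diff)
    then show ?thesis by simp
  qed
  then show ?thesis
    using T by (auto simp: fourier_motzkin_def)
qed

lemma rat_cone_Int_halfspace:
  assumes "rat_cone \<sigma>" "a \<in> range lat_to_real"
  shows "rat_cone (\<sigma> \<inter> {v. 0 \<le> a \<bullet> v})"
proof -
  obtain T where T: "finite T" "T \<subseteq> range lat_to_real" "\<sigma> = convex_cone hull T"
    using assms(1) unfolding rat_cone_iff by (elim exE conjE)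
  then have "\<sigma> \<inter> {v. 0 \<le> a \<bullet> v} = convex_cone hull (fourier_motzkin a T)"
    by (simp add: convex_cone_hull_Int_halfspace)
  then show ?thesis
    unfolding rat_cone_iff using T(1,2) assms(2)
    by (intro exI[of _ "fourier_motzkin a T"] conjI finite_fourier_motzkin fourier_motzkin_lattice)
qed

lemma rat_cone_Int_halfspaces:
  assumes "finite A" "A \<subseteq> range lat_to_real" "rat_cone \<sigma>"
  shows "rat_cone (\<sigma> \<inter> {v. \<forall>a\<in>A. 0 \<le> a \<bullet> v})"
  using assms(1,2)
proof (induction A rule: finite_induct)
  case empty
  then show ?case using assms(3) by simp
next
  case (insert b A)
  have "\<sigma> \<inter> {v. \<forall>a\<in>insert b A. 0 \<le> a \<bullet> v} = \<sigma> \<inter> {v. \<forall>a\<in>A. 0 \<le> a \<bullet> v} \<inter> {v. 0 \<le> b \<bullet> v}"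
    by auto
  moreover have "rat_cone (\<sigma> \<inter> {v. \<forall>a\<in>A. 0 \<le> a \<bullet> v} \<inter> {v. 0 \<le> b \<bullet> v})"
    using insert by (intro rat_cone_Int_halfspace) auto
  ultimately show ?case
    by simp
qed

lemma rat_cone_face_of:
  assumes "rat_cone \<sigma>" "F face_of \<sigma>" "F \<noteq> {}"
  shows "rat_cone F"
proof -
  obtain T where T: "finite T" "T \<subseteq> range lat_to_real" "\<sigma> = convex_cone hull T"
    using assms(1) unfolding rat_cone_iff by (elim exE conjE)
  then have "F = convex_cone hull (T \<inter> F)"
    using assms(2,3) by (intro face_of_convex_cone_hull_finite) auto
  then show ?thesis
    unfolding rat_cone_iff using T(1,2) by (intro exI[of _ "T \<inter> F"]) auto
qed

lemma finite_faces_rat_cone: "rat_cone \<sigma> \<Longrightarrow> finite {F. F face_of \<sigma>}"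
  by (auto simp: rat_cone_iff finite_faces_convex_cone_hull)

lemma is_fanD:
  assumes "is_fan \<Sigma>"
  shows "finite \<Sigma>"
    and "\<sigma> \<in> \<Sigma> \<Longrightarrow> rat_cone \<sigma>"
    and "\<sigma> \<in> \<Sigma> \<Longrightarrow> strongly_convex \<sigma>"
    and "\<sigma> \<in> \<Sigma> \<Longrightarrow> \<sigma>' \<in> \<Sigma> \<Longrightarrow> (\<sigma> \<inter> \<sigma>') face_of \<sigma>"
  using assms unfolding is_fan_def by blast+

lemma zero_face_of_fan_cone:
  assumes "is_fan \<Sigma>" "\<sigma> \<in> \<Sigma>"
  shows "{0} face_of \<sigma>"
  using is_fanD(3)[OF assms] unfolding strongly_convex_def
  by (rule zero_face_of_pointed_cone[OF convex_cone_rat_cone[OF is_fanD(2)[OF assms]]])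

section \<open>Refinement by the normal fan of a Newton polytope\<close>

text \<open>The inner normal cone of the Newton polytope \<open>conv S\<close> at \<open>m\<close>.\<close>
definition newton_cone :: "(int ^ 'n::finite) set \<Rightarrow> int ^ 'n \<Rightarrow> (real ^ 'n) set" where
  "newton_cone S m = {v. \<forall>m'\<in>S. lat_to_real m \<bullet> v \<le> lat_to_real m' \<bullet> v}"

lemma newton_cone_eq_halfspaces:
  "newton_cone S m = {v. \<forall>a\<in>(\<lambda>m'. lat_to_real (m' - m)) ` S. 0 \<le> a \<bullet> v}"
  by (auto simp: newton_cone_def lat_to_real_diff inner_diff_left)

lemma convex_newton_cone: "convex (newton_cone S m)"
proof -
  have "newton_cone S m = (\<Inter>m'\<in>S. {v. lat_to_real (m' - m) \<bullet> v \<ge> 0})"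
    by (auto simp: newton_cone_eq_halfspaces)
  then show ?thesis
    by (simp add: convex_INT convex_halfspace_ge)
qed

lemma rat_cone_Int_newton_cone:
  "finite S \<Longrightarrow> rat_cone \<sigma> \<Longrightarrow> rat_cone (\<sigma> \<inter> newton_cone S m)"
  unfolding newton_cone_eq_halfspaces by (rule rat_cone_Int_halfspaces) auto

lemma newton_cone_Int_face_of:
  assumes "m1 \<in> S" "m2 \<in> S"
  shows "(newton_cone S m1 \<inter> newton_cone S m2) face_of newton_cone S m1"
proof -
  have "newton_cone S m1 \<inter> newton_cone S m2
      = newton_cone S m1 \<inter> {v. lat_to_real (m2 - m1) \<bullet> v = 0}"
    using assms by (force simp: newton_cone_def lat_to_real_diff inner_diff_left)
  moreover have "(newton_cone S m1 \<inter> {v. lat_to_real (m2 - m1) \<bullet> v = 0}) face_of newton_cone S m1"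
    using assms(2)
    by (intro face_of_Int_supporting_hyperplane_ge convex_newton_cone)
       (auto simp: newton_cone_def lat_to_real_diff inner_diff_left)
  ultimately show ?thesis by simp
qed

lemma newton_cones_cover:
  assumes "finite S" "S \<noteq> {}"
  obtains m where "m \<in> S" "v \<in> newton_cone S m"
proof
  let ?m = "arg_min_on (\<lambda>m. lat_to_real m \<bullet> v) S"
  show "?m \<in> S"
    using arg_min_if_finite(1)[OF assms] .
  show "v \<in> newton_cone S ?m"
    using arg_min_least[OF assms, of _ "\<lambda>m. lat_to_real m \<bullet> v"] by (simp add: newton_cone_def)
qed

lemma newton_cone_perp_lat:
  assumes "m1 \<in> S" "m2 \<in> S" "\<tau> \<subseteq> newton_cone S m1" "\<tau> \<subseteq> newton_cone S m2"
  shows "m2 - m1 \<in> perp_lat \<tau>"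
proof -
  have "lat_to_real m1 \<bullet> v \<le> lat_to_real m2 \<bullet> v" "lat_to_real m2 \<bullet> v \<le> lat_to_real m1 \<bullet> v"
    if "v \<in> \<tau>" for v
    using assms that unfolding newton_cone_def by blast+
  then show ?thesis
    by (simp add: perp_lat_def lat_to_real_diff inner_diff_left order.antisym)
qed

lemma newton_cone_dual_lat:
  assumes "m' \<in> S" "\<sigma> \<subseteq> newton_cone S m"
  shows "m' - m \<in> dual_lat \<sigma>"
proof -
  have "lat_to_real m \<bullet> v \<le> lat_to_real m' \<bullet> v" if "v \<in> \<sigma>" for v
    using assms that unfolding newton_cone_def by blast
  then show ?thesis
    by (simp add: dual_lat_def lat_to_real_diff inner_diff_left)
qed

text \<open>The common refinement of \<open>\<Sigma>\<close> and the normal fan of the Newton polytope \<open>conv S\<close>.\<close>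
definition newton_refinement :: "(real ^ 'n::finite) set set \<Rightarrow> (int ^ 'n) set \<Rightarrow> (real ^ 'n) set set" where
  "newton_refinement \<Sigma> S = {F. F \<noteq> {} \<and> (\<exists>\<sigma>\<in>\<Sigma>. \<exists>m\<in>S. F face_of \<sigma> \<inter> newton_cone S m)}"

lemma newton_refinement_subset_newton_cone:
  "\<tau> \<in> newton_refinement \<Sigma> S \<Longrightarrow> \<exists>m\<in>S. \<tau> \<subseteq> newton_cone S m"
  unfolding newton_refinement_def using face_of_imp_subset by blast

lemma newton_refinement_face_of_Int:
  assumes fan: "is_fan \<Sigma>" and "F1 \<in> newton_refinement \<Sigma> S" "F2 \<in> newton_refinement \<Sigma> S"
  shows "(F1 \<inter> F2) face_of F1"
proof -
  obtain \<sigma>1 m1 where \<sigma>1: "\<sigma>1 \<in> \<Sigma>" "m1 \<in> S" "F1 face_of \<sigma>1 \<inter> newton_cone S m1"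
    using assms(2) unfolding newton_refinement_def by blast
  obtain \<sigma>2 m2 where \<sigma>2: "\<sigma>2 \<in> \<Sigma>" "m2 \<in> S" "F2 face_of \<sigma>2 \<inter> newton_cone S m2"
    using assms(3) unfolding newton_refinement_def by blast
  have "(\<sigma>1 \<inter> \<sigma>2) \<inter> (newton_cone S m1 \<inter> newton_cone S m2) face_of \<sigma>1 \<inter> newton_cone S m1"
    using is_fanD(4)[OF fan \<sigma>1(1) \<sigma>2(1)] newton_cone_Int_face_of[OF \<sigma>1(2) \<sigma>2(2)]
    by (rule face_of_Int_Int)
  moreover have "(\<sigma>2 \<inter> \<sigma>1) \<inter> (newton_cone S m2 \<inter> newton_cone S m1) face_of \<sigma>2 \<inter> newton_cone S m2"
    using is_fanD(4)[OF fan \<sigma>2(1) \<sigma>1(1)] newton_cone_Int_face_of[OF \<sigma>2(2) \<sigma>1(2)]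
    by (rule face_of_Int_Int)
  moreover have "(\<sigma>2 \<inter> \<sigma>1) \<inter> (newton_cone S m2 \<inter> newton_cone S m1)
      = (\<sigma>1 \<inter> \<sigma>2) \<inter> (newton_cone S m1 \<inter> newton_cone S m2)"
    "(\<sigma>1 \<inter> \<sigma>2) \<inter> (newton_cone S m1 \<inter> newton_cone S m2)
      = (\<sigma>1 \<inter> newton_cone S m1) \<inter> (\<sigma>2 \<inter> newton_cone S m2)"
    by blast+
  ultimately show ?thesis
    using face_of_Int_subface \<sigma>1(3) \<sigma>2(3) by metis
qed

lemma is_fan_newton_refinement:
  assumes fan: "is_fan \<Sigma>" and S: "finite S"
  shows "is_fan (newton_refinement \<Sigma> S)"
proof -
  let ?R = "newton_refinement \<Sigma> S"
  have rat: "rat_cone (\<sigma> \<inter> newton_cone S m)" if "\<sigma> \<in> \<Sigma>" for \<sigma> m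
    using rat_cone_Int_newton_cone[OF S is_fanD(2)[OF fan that]] .
  have "?R \<subseteq> (\<Union>\<sigma>\<in>\<Sigma>. \<Union>m\<in>S. {F. F face_of \<sigma> \<inter> newton_cone S m})"
    unfolding newton_refinement_def by blast
  moreover have "finite (\<Union>\<sigma>\<in>\<Sigma>. \<Union>m\<in>S. {F. F face_of \<sigma> \<inter> newton_cone S m})"
    using is_fanD(1)[OF fan] S rat finite_faces_rat_cone by blast
  ultimately have "finite ?R"
    by (rule finite_subset)
  moreover have "rat_cone F \<and> strongly_convex F" if "F \<in> ?R" for F
  proof
    obtain \<sigma> m where \<sigma>: "\<sigma> \<in> \<Sigma>" and F: "F face_of \<sigma> \<inter> newton_cone S m" "F \<noteq> {}"
      using \<open>F \<in> ?R\<close> unfolding newton_refinement_def by blast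
    show "rat_cone F"
      using rat_cone_face_of[OF rat[OF \<sigma>] F] .
    then have "0 \<in> F"
      using convex_cone_rat_cone convex_cone_contains_0 by blast
    then have "0 \<in> F \<inter> uminus ` F"
      by (auto intro: image_eqI[of 0 uminus 0])
    moreover have "F \<inter> uminus ` F \<subseteq> \<sigma> \<inter> uminus ` \<sigma>"
      using face_of_imp_subset[OF F(1)] by blast
    ultimately show "strongly_convex F"
      using is_fanD(3)[OF fan \<sigma>] unfolding strongly_convex_def by blast
  qed
  moreover have "G \<in> ?R" if "F \<in> ?R" "G face_of F" "G \<noteq> {}" for F G
    using that face_of_trans unfolding newton_refinement_def by blast
  moreover have "(F1 \<inter> F2) face_of F1 \<and> (F1 \<inter> F2) face_of F2" if "F1 \<in> ?R" "F2 \<in> ?R" for F1 F2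
    using newton_refinement_face_of_Int[OF fan that] newton_refinement_face_of_Int[OF fan that(2,1)]
    by (simp add: Int_commute)
  ultimately show ?thesis
    unfolding is_fan_def by blast
qed

lemma refines_newton_refinement:
  assumes fan: "is_fan \<Sigma>" and S: "finite S" "S \<noteq> {}"
  shows "refines (newton_refinement \<Sigma> S) \<Sigma>"
proof -
  have "\<Union>\<Sigma> \<subseteq> \<Union>(newton_refinement \<Sigma> S)"
  proof
    fix v assume "v \<in> \<Union>\<Sigma>"
    then obtain \<sigma> where "\<sigma> \<in> \<Sigma>" "v \<in> \<sigma>" by blast
    obtain m where "m \<in> S" "v \<in> newton_cone S m"
      using newton_cones_cover[OF S] .
    have "convex \<sigma>"
      using convex_cone_rat_cone[OF is_fanD(2)[OF fan \<open>\<sigma> \<in> \<Sigma>\<close>]] by (simp add: convex_cone_def)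
    then have "(\<sigma> \<inter> newton_cone S m) face_of \<sigma> \<inter> newton_cone S m"
      by (intro face_of_refl convex_Int convex_newton_cone)
    then have "\<sigma> \<inter> newton_cone S m \<in> newton_refinement \<Sigma> S"
      unfolding newton_refinement_def using \<open>\<sigma> \<in> \<Sigma>\<close> \<open>m \<in> S\<close> \<open>v \<in> \<sigma>\<close> \<open>v \<in> newton_cone S m\<close> by blast
    then show "v \<in> \<Union>(newton_refinement \<Sigma> S)"
      using \<open>v \<in> \<sigma>\<close> \<open>v \<in> newton_cone S m\<close> by blast
  qed
  moreover have "\<forall>\<tau>\<in>newton_refinement \<Sigma> S. \<exists>\<sigma>\<in>\<Sigma>. \<tau> \<subseteq> \<sigma>"
    unfolding newton_refinement_def using face_of_imp_subset by blast
  ultimately show ?thesis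
    unfolding refines_def using is_fan_newton_refinement[OF fan S(1)] by blast
qed

section \<open>Laurent polynomials on toric charts\<close>

lemma tpointsD:
  assumes "p \<in> tpoints \<Sigma>"
  shows "fst p \<in> \<Sigma>"
    and "snd p m \<noteq> 0 \<longleftrightarrow> m \<in> perp_lat (fst p)"
    and "m \<in> perp_lat (fst p) \<Longrightarrow> m' \<in> perp_lat (fst p) \<Longrightarrow> snd p (m + m') = snd p m * snd p m'"
  using assms unfolding tpoints_def by (simp_all add: case_prod_unfold)

lemma perp_lat_diff: "a \<in> perp_lat \<tau> \<Longrightarrow> b \<in> perp_lat \<tau> \<Longrightarrow> a - b \<in> perp_lat \<tau>"
  by (simp add: perp_lat_def lat_to_real_diff inner_diff_left)

lemma perp_lat_orbit_dim_0:
  assumes "orbit_dim \<tau> = 0"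
  shows "perp_lat \<tau> = {0}"
proof -
  have "m = 0" if "m \<in> perp_lat \<tau>" for m
  proof (rule ccontr)
    assume "m \<noteq> 0"
    have "\<tau> \<subseteq> {v. lat_to_real m \<bullet> v = 0}"
      using that by (auto simp: perp_lat_def)
    then have "dim \<tau> \<le> dim {v. lat_to_real m \<bullet> v = 0}"
      by (rule dim_subset)
    also have "\<dots> = CARD('a) - 1"
      using \<open>m \<noteq> 0\<close> by (simp add: dim_hyperplane lat_to_real_eq_0_iff)
    finally have "dim \<tau> \<le> CARD('a) - 1" .
    moreover have "CARD('a) \<le> dim \<tau>" "0 < CARD('a)"
      using assms by (simp_all add: orbit_dim_def)
    ultimately show False
      by linarith
  qed
  then show ?thesis
    by (auto simp: perp_lat_def lat_to_real_0)
qed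

definition poly_support :: "('a \<Rightarrow> 'k::zero) \<Rightarrow> 'a set" where
  "poly_support f = {m. f m \<noteq> 0}"

definition shift_poly :: "int ^ 'n \<Rightarrow> (int ^ 'n \<Rightarrow> 'k) \<Rightarrow> int ^ 'n \<Rightarrow> 'k" where
  "shift_poly m f = (\<lambda>u. f (u + m))"

lemma poly_support_shift_poly: "poly_support (shift_poly m f) = (\<lambda>m'. m' - m) ` poly_support f"
  by (force simp: poly_support_def shift_poly_def image_iff algebra_simps)

lemma eval_poly_shift_poly:
  "eval_poly (shift_poly m f) p = (\<Sum>m'\<in>poly_support f. f m' * snd p (m' - m))"
proof -
  have "inj_on (\<lambda>m'. m' - m) (poly_support f)"
    by (simp add: inj_on_def)
  then show ?thesis
    unfolding eval_poly_def poly_support_def[symmetric] poly_support_shift_poly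
    by (simp add: sum.reindex shift_poly_def)
qed

lemma chart_poly_shift_poly:
  assumes "finite (poly_support f)" "\<sigma> \<subseteq> newton_cone (poly_support f) m"
  shows "chart_poly \<sigma> (shift_poly m f)"
  using assms newton_cone_dual_lat
  by (auto simp: chart_poly_def poly_support_def[symmetric] poly_support_shift_poly)

lemma eval_shift_poly_change:
  fixes f :: "int ^ 'n::finite \<Rightarrow> 'k::field"
  assumes p: "p \<in> tpoints \<Sigma>" and d: "m2 - m1 \<in> perp_lat (fst p)"
  shows "eval_poly (shift_poly m1 f) p = snd p (m2 - m1) * eval_poly (shift_poly m2 f) p"
proof -
  have shift: "snd p (m' - m1) = snd p (m2 - m1) * snd p (m' - m2)" for m'
  proof (cases "m' - m2 \<in> perp_lat (fst p)")
    case True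
    have "m' - m1 = (m2 - m1) + (m' - m2)"
      by (simp add: algebra_simps)
    then show ?thesis
      using tpointsD(3)[OF p d True] by simp
  next
    case False
    have "m' - m2 = (m' - m1) - (m2 - m1)"
      by (simp add: algebra_simps)
    then have "m' - m1 \<notin> perp_lat (fst p)"
      using False perp_lat_diff[OF _ d, of "m' - m1"] by metis
    then have "snd p (m' - m1) = 0" "snd p (m' - m2) = 0"
      using False tpointsD(2)[OF p] by blast+
    then show ?thesis
      by simp
  qed
  have "eval_poly (shift_poly m1 f) p
      = (\<Sum>m'\<in>poly_support f. snd p (m2 - m1) * (f m' * snd p (m' - m2)))"
    unfolding eval_poly_shift_poly by (rule sum.cong[OF refl]) (subst shift, simp)
  then show ?thesis
    by (simp add: eval_poly_shift_poly sum_distrib_left)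
qed

text \<open>A closed set containing the closure of \<open>V(f) \<inter> T\<close>: on the chart of a cone inside
  \<open>newton_cone (poly_support f) m\<close> the Laurent polynomial \<open>x\<^sup>-\<^sup>m f\<close> is regular, and two
  admissible choices of \<open>m\<close> give equations differing by a unit.\<close>
definition toric_zero_locus ::
    "(real ^ 'n::finite) set set \<Rightarrow> (int ^ 'n \<Rightarrow> 'k::field) \<Rightarrow> ((real ^ 'n) set \<times> (int ^ 'n \<Rightarrow> 'k)) set" where
  "toric_zero_locus \<Sigma> f = {q \<in> tpoints \<Sigma>. \<forall>m\<in>poly_support f.
      fst q \<subseteq> newton_cone (poly_support f) m \<longrightarrow> eval_poly (shift_poly m f) q = 0}"

lemma zclosed_toric_zero_locus:
  fixes f :: "int ^ 'n::finite \<Rightarrow> 'k::field"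
  assumes fin: "finite (poly_support f)"
    and cover: "\<forall>\<sigma>\<in>\<Sigma>. \<exists>m\<in>poly_support f. \<sigma> \<subseteq> newton_cone (poly_support f) m"
  shows "zclosed \<Sigma> (toric_zero_locus \<Sigma> f)"
  unfolding zclosed_def
proof (intro conjI ballI)
  show "toric_zero_locus \<Sigma> f \<subseteq> tpoints \<Sigma>"
    by (auto simp: toric_zero_locus_def)
  fix \<sigma> assume "\<sigma> \<in> \<Sigma>"
  then obtain m where m: "m \<in> poly_support f" "\<sigma> \<subseteq> newton_cone (poly_support f) m"
    using cover by blast
  have "q \<in> toric_zero_locus \<Sigma> f \<longleftrightarrow> eval_poly (shift_poly m f) q = 0" if "q \<in> chart \<Sigma> \<sigma>" for q
  proof -
    have q: "q \<in> tpoints \<Sigma>" "fst q \<subseteq> newton_cone (poly_support f) m"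
      using that m(2) face_of_imp_subset by (auto simp: chart_def)
    have "eval_poly (shift_poly m' f) q = 0"
      if "m' \<in> poly_support f" "fst q \<subseteq> newton_cone (poly_support f) m'"
        and "eval_poly (shift_poly m f) q = 0" for m'
      using that eval_shift_poly_change[OF q(1) newton_cone_perp_lat[OF that(1) m(1) that(2) q(2)]]
      by simp
    then show ?thesis
      using q m(1) by (auto simp: toric_zero_locus_def)
  qed
  then have "toric_zero_locus \<Sigma> f \<inter> chart \<Sigma> \<sigma>
      = {q \<in> chart \<Sigma> \<sigma>. \<forall>g\<in>{shift_poly m f}. eval_poly g q = 0}"
    by auto
  moreover have "chart_poly \<sigma> (shift_poly m f)"
    using chart_poly_shift_poly[OF fin m(2)] .
  ultimately show "\<exists>F. (\<forall>g\<in>F. chart_poly \<sigma> g) \<and>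
      toric_zero_locus \<Sigma> f \<inter> chart \<Sigma> \<sigma> = {q \<in> chart \<Sigma> \<sigma>. \<forall>g\<in>F. eval_poly g q = 0}"
    by blast
qed

lemma toric_zero_locus_big_torus:
  fixes f :: "int ^ 'n::finite \<Rightarrow> 'k::field"
  assumes q: "q \<in> big_torus \<Sigma>" and f: "eval_poly f q = 0"
  shows "q \<in> toric_zero_locus \<Sigma> f"
proof -
  have qt: "q \<in> tpoints \<Sigma>" and perp: "perp_lat (fst q) = UNIV"
    using q by (auto simp: big_torus_def perp_lat_def)
  have "snd q m * eval_poly (shift_poly m f) q = 0" for m
    using eval_shift_poly_change[OF qt, of m 0 f] f perp by (simp add: shift_poly_def)
  moreover have "snd q m \<noteq> 0" for m
    using tpointsD(2)[OF qt] perp by simp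
  ultimately show ?thesis
    using qt by (simp add: toric_zero_locus_def)
qed

lemma orbit_dim_0_not_subset_toric_zero_locus:
  fixes f :: "int ^ 'n::finite \<Rightarrow> 'k::field"
  assumes "\<tau> \<in> \<Sigma>" "orbit_dim \<tau> = 0"
    and "finite (poly_support f)" "m \<in> poly_support f" "\<tau> \<subseteq> newton_cone (poly_support f) m"
  shows "\<not> orbit \<Sigma> \<tau> \<subseteq> toric_zero_locus \<Sigma> f"
proof
  define p :: "(real ^ 'n) set \<times> (int ^ 'n \<Rightarrow> 'k)" where "p = (\<tau>, \<lambda>u. if u = 0 then 1 else 0)"
  have "p \<in> orbit \<Sigma> \<tau>"
    using assms(1) perp_lat_orbit_dim_0[OF assms(2)] by (simp add: p_def orbit_def tpoints_def)
  moreover have "eval_poly (shift_poly m f) p = f m"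
    using assms(3,4) by (simp add: eval_poly_shift_poly p_def if_distrib[of "(*) _"] cong: if_cong)
  ultimately show "orbit \<Sigma> \<tau> \<subseteq> toric_zero_locus \<Sigma> f \<Longrightarrow> False"
    using assms(4,5) by (auto simp: toric_zero_locus_def poly_support_def p_def)
qed

lemma separating_poly:
  fixes W :: "((real ^ 'n::finite) set \<times> (int ^ 'n \<Rightarrow> 'k::field)) set"
  assumes fan: "is_fan \<Sigma>" and W: "zclosed \<Sigma> W" and p: "p \<in> tpoints \<Sigma>" "p \<notin> W"
  obtains f where "finite (poly_support f)" "eval_poly f p \<noteq> 0"
    "\<forall>q\<in>W \<inter> big_torus \<Sigma>. eval_poly f q = 0"
proof -
  let ?\<rho> = "fst p"
  have "?\<rho> \<in> \<Sigma>"
    using tpointsD(1)[OF p(1)] .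
  then obtain F where F: "\<forall>f\<in>F. chart_poly ?\<rho> f"
    "W \<inter> chart \<Sigma> ?\<rho> = {q \<in> chart \<Sigma> ?\<rho>. \<forall>f\<in>F. eval_poly f q = 0}"
    using W unfolding zclosed_def by blast
  have "convex ?\<rho>"
    using convex_cone_rat_cone[OF is_fanD(2)[OF fan \<open>?\<rho> \<in> \<Sigma>\<close>]] by (simp add: convex_cone_def)
  then have "p \<in> chart \<Sigma> ?\<rho>"
    using p(1) by (simp add: chart_def face_of_refl)
  then have "p \<notin> {q \<in> chart \<Sigma> ?\<rho>. \<forall>f\<in>F. eval_poly f q = 0}"
    using p(2) by (simp flip: F(2))
  then obtain f where f: "f \<in> F" "eval_poly f p \<noteq> 0"
    using \<open>p \<in> chart \<Sigma> ?\<rho>\<close> by blast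
  show ?thesis
  proof
    show "finite (poly_support f)"
      using F(1) f(1) by (simp add: chart_poly_def poly_support_def)
    show "eval_poly f p \<noteq> 0"
      by (fact f(2))
    show "\<forall>q\<in>W \<inter> big_torus \<Sigma>. eval_poly f q = 0"
    proof
      fix q assume "q \<in> W \<inter> big_torus \<Sigma>"
      then have "q \<in> W \<inter> chart \<Sigma> ?\<rho>"
        using zero_face_of_fan_cone[OF fan \<open>?\<rho> \<in> \<Sigma>\<close>] by (simp add: big_torus_def chart_def)
      then show "eval_poly f q = 0"
        using f(1) unfolding F(2) by blast
    qed
  qed
qed

lemma strict_transform_subset_toric_zero_locus:
  fixes f :: "int ^ 'n::finite \<Rightarrow> 'k::field"
  assumes "finite (poly_support f)"
    and "\<forall>\<sigma>\<in>\<Sigma>'. \<exists>m\<in>poly_support f. \<sigma> \<subseteq> newton_cone (poly_support f) m"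
    and "W \<subseteq> tpoints \<Sigma>" "\<forall>q\<in>W \<inter> big_torus \<Sigma>. eval_poly f q = 0"
  shows "strict_transform \<Sigma>' W \<subseteq> toric_zero_locus \<Sigma>' f"
proof -
  have "{q \<in> big_torus \<Sigma>'. q \<in> W} \<subseteq> W \<inter> big_torus \<Sigma>"
    using assms(3) by (auto simp: big_torus_def)
  then have "{q \<in> big_torus \<Sigma>'. q \<in> W} \<subseteq> toric_zero_locus \<Sigma>' f"
    using assms(4) toric_zero_locus_big_torus by blast
  then show ?thesis
    unfolding strict_transform_def zclosure_def
    using zclosed_toric_zero_locus[OF assms(1,2)] by (intro Inter_lower) simp
qed

theorem lemma6p1:
  fixes \<Sigma> :: "(real ^ 'n::finite) set set"
    and W :: "((real ^ 'n) set \<times> (int ^ 'n \<Rightarrow> 'k::{alg_closed_field, field_char_0})) set"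
  assumes "is_fan \<Sigma>"
    and "zclosed \<Sigma> W"
    and "W \<noteq> tpoints \<Sigma>"
    and "\<forall>Z. irred_component \<Sigma> W Z \<longrightarrow> \<not> Z \<subseteq> toric_boundary \<Sigma>"
  shows "\<exists>\<Sigma>'. refines \<Sigma>' \<Sigma> \<and>
           (\<forall>\<tau>\<in>\<Sigma>'. orbit_dim \<tau> = 0 \<longrightarrow>
              \<not> (orbit \<Sigma>' \<tau> \<subseteq> strict_transform \<Sigma>' W))"
proof -
  have "W \<subseteq> tpoints \<Sigma>"
    using assms(2) by (simp add: zclosed_def)
  then obtain p where p: "p \<in> tpoints \<Sigma>" "p \<notin> W"
    using assms(3) by blast
  obtain f where f: "finite (poly_support f)" "eval_poly f p \<noteq> 0"
    "\<forall>q\<in>W \<inter> big_torus \<Sigma>. eval_poly f q = 0"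
    using separating_poly[OF assms(1,2) p] .
  define S where "S = poly_support f"
  define \<Sigma>' where "\<Sigma>' = newton_refinement \<Sigma> S"
  have "S \<noteq> {}"
    using f(2) unfolding S_def poly_support_def eval_poly_def by (metis sum.empty)
  have cover: "\<forall>\<tau>\<in>\<Sigma>'. \<exists>m\<in>S. \<tau> \<subseteq> newton_cone S m"
    unfolding \<Sigma>'_def using newton_refinement_subset_newton_cone by blast
  have strict: "strict_transform \<Sigma>' W \<subseteq> toric_zero_locus \<Sigma>' f"
    using strict_transform_subset_toric_zero_locus f(1,3) cover \<open>W \<subseteq> tpoints \<Sigma>\<close>
    unfolding S_def by blast
  have "\<not> orbit \<Sigma>' \<tau> \<subseteq> strict_transform \<Sigma>' W" if "\<tau> \<in> \<Sigma>'" "orbit_dim \<tau> = 0" for \<tau>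
    using cover orbit_dim_0_not_subset_toric_zero_locus[OF that f(1)] strict that(1)
    unfolding S_def by blast
  moreover have "refines \<Sigma>' \<Sigma>"
    unfolding \<Sigma>'_def using refines_newton_refinement[OF assms(1) f(1)] \<open>S \<noteq> {}\<close> S_def by blast
  ultimately show ?thesis
    by blast
qed

end
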